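(* Let $a<b$, $1<p<\infty$, $q=p/(p-1)$, $\Delta=\{(t,\tau):a\le\tau<t\le b\}$, $k\in L^q(\Delta;\mathbb{R})$, $\lambda,\mu\in\mathbb{R}$, and let $K_P,B_P$ be as in the context. Let $F:\mathbb{R}^4\times[a,b]\to\mathbb{R}$ be of class $C^1$, $y_a\in\mathbb{R}$, $W^{1,p}_a(a,b;\mathbb{R})=\{y\in W^{1,p}(a,b;\mathbb{R}):y(a)=y_a\}$, and $\mathcal{I}(y)=\int_a^bF(y(t),K_P[y](t),\dot y(t),B_P[y](t),t)\,dt$. Assume that for all $(x_1,x_2,x_3,x_4,t)\in\mathbb{R}^4\times[a,b]$, $$F(x_1,x_2,x_3,x_4,t)\ge c_0|x_3|^p+\sum_{k=1}^Nc_k|x_1|^{d_{1,k}}|x_2|^{d_{2,k}}|x_3|^{d_{3,k}}|x_4|^{d_{4,k}},$$ where $c_0>0$, $N\in\mathbb{N}$, and for each $k=1,\dots,N$, $c_k\in\mathbb{R}$ and $(d_{1,k},d_{2,k},d_{3,k},d_{4,k})\in[0,\infty)\times[0,q]\times[0,p]\times[0,q]$ satisfies $d_{2,k}+(q/p)d_{3,k}+d_{4,k}\le q$ and $0\le d_{1,k}+d_{2,k}+d_{3,k}+d_{4,k}<p$. Then $\mathcal{I}$ is coercive on $W^{1,p}_a(a,b;\mathbb{R})$.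
   Context: $K_P[f](t)=\lambda\int_a^t k(t,\tau)f(\tau)d\tau+\mu\int_t^bk(\tau,t)f(\tau)d\tau$ and $B_P=K_P\circ\frac{d}{dt}$. $\mathcal{I}$ is coercive on a set $\mathcal{A}$ if $\mathcal{I}(y)\to+\infty$ as $\|y\|_{W^{1,p}}\to\infty$ with $y\in\mathcal{A}$. *)

theory Defs
  imports "HOL-Analysis.Analysis"
begin

definition Lp_on :: "real \<Rightarrow> real \<Rightarrow> real \<Rightarrow> (real \<Rightarrow> real) \<Rightarrow> bool" where
  "Lp_on p a b g \<longleftrightarrow> set_borel_measurable lborel {a..b} g
      \<and> set_integrable lborel {a..b} (\<lambda>t. \<bar>g t\<bar> powr p)"

definition Lp_norm :: "real \<Rightarrow> real \<Rightarrow> real \<Rightarrow> (real \<Rightarrow> real) \<Rightarrow> real" where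
  "Lp_norm p a b g = (LINT t:{a..b}|lborel. \<bar>g t\<bar> powr p) powr (1 / p)"

text \<open>g is a (weak) derivative of y in L^p: y is the indefinite integral of g on [a,b]
  (the absolutely continuous representative).\<close>
definition is_wderiv :: "real \<Rightarrow> real \<Rightarrow> real \<Rightarrow> (real \<Rightarrow> real) \<Rightarrow> (real \<Rightarrow> real) \<Rightarrow> bool" where
  "is_wderiv p a b y g \<longleftrightarrow> Lp_on p a b g
      \<and> (\<forall>t\<in>{a..b}. y t = y a + (LINT s:{a..t}|lborel. g s))"

definition W1p :: "real \<Rightarrow> real \<Rightarrow> real \<Rightarrow> (real \<Rightarrow> real) set" where
  "W1p p a b = {y. \<exists>g. is_wderiv p a b y g}"

definition wderiv :: "real \<Rightarrow> real \<Rightarrow> real \<Rightarrow> (real \<Rightarrow> real) \<Rightarrow> (real \<Rightarrow> real)" where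
  "wderiv p a b y = (SOME g. is_wderiv p a b y g)"

definition W1p_norm :: "real \<Rightarrow> real \<Rightarrow> real \<Rightarrow> (real \<Rightarrow> real) \<Rightarrow> real" where
  "W1p_norm p a b y = Lp_norm p a b y + Lp_norm p a b (wderiv p a b y)"

definition KP :: "real \<Rightarrow> real \<Rightarrow> (real \<times> real \<Rightarrow> real) \<Rightarrow> real \<Rightarrow> real \<Rightarrow> (real \<Rightarrow> real) \<Rightarrow> real \<Rightarrow> real" where
  "KP lam mu k a b f t = lam * (LINT \<tau>:{a..t}|lborel. k (t, \<tau>) * f \<tau>)
                        + mu * (LINT \<tau>:{t..b}|lborel. k (\<tau>, t) * f \<tau>)"

definition BP :: "real \<Rightarrow> real \<Rightarrow> (real \<times> real \<Rightarrow> real) \<Rightarrow> real \<Rightarrow> real \<Rightarrow> real \<Rightarrow> (real \<Rightarrow> real) \<Rightarrow> real \<Rightarrow> real" where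
  "BP lam mu k a b p y = KP lam mu k a b (wderiv p a b y)"

definition ext_integral :: "real \<Rightarrow> real \<Rightarrow> (real \<Rightarrow> real) \<Rightarrow> ereal" where
  "ext_integral a b f = enn2ereal (\<integral>\<^sup>+ t\<in>{a..b}. ennreal (f t) \<partial>lborel)
                      - enn2ereal (\<integral>\<^sup>+ t\<in>{a..b}. ennreal (- f t) \<partial>lborel)"

definition Ifun :: "(real \<Rightarrow> real \<Rightarrow> real \<Rightarrow> real \<Rightarrow> real \<Rightarrow> real) \<Rightarrow> real \<Rightarrow> real \<Rightarrow> (real \<times> real \<Rightarrow> real)
    \<Rightarrow> real \<Rightarrow> real \<Rightarrow> real \<Rightarrow> (real \<Rightarrow> real) \<Rightarrow> ereal" where
  "Ifun F lam mu k a b p y = ext_integral a b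
     (\<lambda>t. F (y t) (KP lam mu k a b y t) (wderiv p a b y t) (BP lam mu k a b p y t) t)"

definition C1_on :: "'a::euclidean_space set \<Rightarrow> ('a \<Rightarrow> real) \<Rightarrow> bool" where
  "C1_on S f \<longleftrightarrow> (\<exists>f'::'a \<Rightarrow> 'a \<Rightarrow>\<^sub>L real.
      (\<forall>x\<in>S. (f has_derivative blinfun_apply (f' x)) (at x within S)) \<and> continuous_on S f')"

text \<open>|x|^d with the convention 0^0 = 1.\<close>
definition pw :: "real \<Rightarrow> real \<Rightarrow> real" where
  "pw x d = (if d = 0 then 1 else \<bar>x\<bar> powr d)"

definition coercive_on :: "'a set \<Rightarrow> ('a \<Rightarrow> real) \<Rightarrow> ('a \<Rightarrow> ereal) \<Rightarrow> bool" where
  "coercive_on A nrm I \<longleftrightarrow> (\<forall>M::real. \<exists>R::real. \<forall>y\<in>A. nrm y > R \<longrightarrow> I y > ereal M)"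

end

theory Submission
  imports Defs
begin

text \<open>Let \<open>R = (\<integral>\<bar>y'\<bar>\<^sup>p + 1)\<^bsup>1/p\<^esup>\<close>. For \<open>y(a) = y\<^sub>a\<close>, both the \<open>W\<^sup>1\<^sup>,\<^sup>p\<close>-norm of \<open>y\<close> and
  \<open>sup \<bar>y\<bar>\<close> are \<open>O(R)\<close>, and by Hoelder's inequality \<open>\<bar>K\<^sub>P[y](t)\<bar>\<close> and \<open>\<bar>B\<^sub>P[y](t)\<bar>\<close> are
  \<open>O(R w(t)\<^bsup>1/q\<^esup>)\<close>, where \<open>w(t)\<close> is the \<open>q\<close>-th power of the \<open>L\<^sup>q\<close>-norm of the two sections
  of \<open>k\<close> through \<open>t\<close>; by Tonelli \<open>w\<close> is integrable. Young's inequality and the constraint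
  \<open>d\<^sub>2 + (q/p) d\<^sub>3 + d\<^sub>4 \<le> q\<close> then bound each monomial of the growth condition by
  \<open>C R\<^sup>s (w(t) + \<bar>y'(t)\<bar>\<^sup>p / R\<^sup>p + 1)\<close> with \<open>s = max (d\<^sub>1 + d\<^sub>2 + d\<^sub>3 + d\<^sub>4) < p\<close>.
  Integrating gives \<open>I(y) \<ge> c\<^sub>0 (R\<^sup>p - 1) - C' R\<^sup>s\<close>, which tends to infinity with \<open>R\<close>.\<close>

lemma conjugate_exponent:
  fixes p q :: real
  assumes "1 < p" "q = p / (p - 1)"
  shows "1 < q" "1 / p + 1 / q = 1"
proof -
  show q: "1 < q" using assms by (simp add: less_divide_eq)
  show "1 / p + 1 / q = 1" using assms q by (simp add: field_simps divide_simps)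
qed

lemma pw_nonneg: "0 \<le> pw x d"
  by (simp add: pw_def)

lemma pw_le_powr:
  assumes "\<bar>x\<bar> \<le> X" "0 < X" "0 \<le> d"
  shows "pw x d \<le> X powr d"
  using assms by (auto simp: pw_def intro: powr_mono2)

lemma powr_mult_pw_le:
  fixes u v a b :: real
  assumes "1 \<le> u" "0 \<le> a" "0 \<le> b" "a + b \<le> 1"
  shows "u powr a * pw v b \<le> u + \<bar>v\<bar> + 1"
proof -
  define m where "m = max u (max \<bar>v\<bar> 1)"
  have m: "1 \<le> m" "u \<le> m" "\<bar>v\<bar> \<le> m" "m \<le> u + \<bar>v\<bar> + 1"
    using assms by (auto simp: m_def)
  have "u powr a * pw v b \<le> m powr a * m powr b"
    using assms m by (intro mult_mono powr_mono2 pw_le_powr pw_nonneg) auto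
  also have "\<dots> = m powr (a + b)"
    using m by (simp add: powr_add)
  also have "\<dots> \<le> m"
    using powr_mono[of "a + b" 1 m] assms m by simp
  finally show ?thesis
    using m by simp
qed

lemma pw_eq_scaled:
  fixes x d R p :: real
  assumes "0 < R" "0 < p" "0 \<le> d"
  shows "pw x d = R powr d * pw (\<bar>x\<bar> powr p / R powr p) (d / p)"
proof (cases "d = 0")
  case False
  have "pw (\<bar>x\<bar> powr p / R powr p) (d / p) = ((\<bar>x\<bar> / R) powr p) powr (d / p)"
    using assms False by (simp add: pw_def powr_divide)
  also have "\<dots> = \<bar>x\<bar> powr d / R powr d"
    using assms by (simp add: powr_powr powr_divide)
  finally show ?thesis
    using assms False by (simp add: pw_def)
qed (use assms in \<open>simp add: pw_def\<close>)

lemma powr_mult_pw_le_scaled: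
  fixes u x R a d p :: real
  assumes "1 \<le> u" "0 < R" "0 \<le> a" "0 \<le> d" "0 < p" "a + d / p \<le> 1"
  shows "u powr a * pw x d \<le> R powr d * (u + \<bar>x\<bar> powr p / R powr p + 1)"
proof -
  have "u powr a * pw x d = R powr d * (u powr a * pw (\<bar>x\<bar> powr p / R powr p) (d / p))"
    using pw_eq_scaled[of R p d x] assms by (simp add: mult_ac)
  also have "\<dots> \<le> R powr d * (u + \<bar>x\<bar> powr p / R powr p + 1)"
    using powr_mult_pw_le[of u a "d / p" "\<bar>x\<bar> powr p / R powr p"] assms
    by (intro mult_left_mono) auto
  finally show ?thesis .
qed

text \<open>The exponent constraint \<open>(d2 + d4)/q + d3/p \<le> 1\<close> lets the factor coming from
  \<open>x2\<close> and \<open>x4\<close> be absorbed together with \<open>\<bar>x3\<bar>\<^sup>p\<close> by \<open>powr_mult_pw_le_scaled\<close>.\<close>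
lemma pw_product_le:
  fixes x1 x2 x3 x4 C1 C4 R u p q d1 d2 d3 d4 s :: real
  assumes "\<bar>x1\<bar> \<le> C1 * R" "\<bar>x2\<bar> \<le> C4 * R * u powr (1/q)" "\<bar>x4\<bar> \<le> C4 * R * u powr (1/q)"
    and "1 \<le> u" "1 \<le> R" "0 < C1" "0 < C4" "0 < q" "0 < p"
    and d: "0 \<le> d1" "0 \<le> d2" "0 \<le> d3" "0 \<le> d4" "(d2 + d4) / q + d3 / p \<le> 1"
    and "d1 + d2 + d3 + d4 \<le> s"
  shows "pw x1 d1 * pw x2 d2 * pw x3 d3 * pw x4 d4
         \<le> C1 powr d1 * C4 powr (d2 + d4) * R powr s * (u + \<bar>x3\<bar> powr p / R powr p + 1)"
proof -
  define X where "X = C4 * R * u powr (1/q)"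
  have X: "0 < X" using assms by (simp add: X_def)
  have "pw x1 d1 * pw x2 d2 * pw x3 d3 * pw x4 d4 = pw x1 d1 * (pw x2 d2 * pw x4 d4) * pw x3 d3"
    by (simp add: mult_ac)
  also have "\<dots> \<le> (C1 * R) powr d1 * (X powr d2 * X powr d4) * pw x3 d3"
    using assms X d unfolding X_def[symmetric]
    by (intro mult_mono pw_le_powr mult_nonneg_nonneg pw_nonneg) auto
  also have "\<dots> = (C1 * R) powr d1 * (C4 * R) powr (d2 + d4) * (u powr ((d2 + d4) / q) * pw x3 d3)"
    using assms by (simp add: X_def powr_add powr_mult powr_powr add_divide_distrib mult_ac)
  also have "\<dots> \<le> (C1 * R) powr d1 * (C4 * R) powr (d2 + d4) * (R powr d3 * (u + \<bar>x3\<bar> powr p / R powr p + 1))"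
    using powr_mult_pw_le_scaled[of u R "(d2 + d4) / q" d3 p x3] assms d
    by (intro mult_left_mono) auto
  also have "\<dots> = C1 powr d1 * C4 powr (d2 + d4) * R powr (d1 + d2 + d3 + d4) * (u + \<bar>x3\<bar> powr p / R powr p + 1)"
    using assms by (simp add: powr_mult powr_add mult_ac)
  also have "\<dots> \<le> C1 powr d1 * C4 powr (d2 + d4) * R powr s * (u + \<bar>x3\<bar> powr p / R powr p + 1)"
    using assms by (intro mult_right_mono mult_left_mono powr_mono) auto
  finally show ?thesis .
qed

lemma filterlim_powr_minus_powr_at_top:
  fixes c0 p s A :: real
  assumes "0 < c0" "0 \<le> s" "s < p" "0 \<le> A"
  shows "filterlim (\<lambda>R. c0 * (R powr p - 1) - A * R powr s) at_top at_top"
  unfolding filterlim_at_top eventually_at_top_linorder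
proof
  fix M :: real
  define K where "K = (A + \<bar>M\<bar> + 2 * c0) / c0"
  define R0 where "R0 = max 1 (K powr (1 / (p - s)))"
  have K1: "1 \<le> K" using assms by (simp add: K_def field_simps)
  show "\<exists>R0. \<forall>R\<ge>R0. M \<le> c0 * (R powr p - 1) - A * R powr s"
  proof (intro exI allI impI)
    fix R assume R: "R0 \<le> R"
    have R1: "1 \<le> R" using R by (simp add: R0_def)
    have "K = (K powr (1 / (p - s))) powr (p - s)"
      using assms K1 by (simp add: powr_powr)
    also have "\<dots> \<le> R powr (p - s)"
      using R assms K1 by (intro powr_mono2) (auto simp: R0_def)
    finally have KR: "K \<le> R powr (p - s)" .
    have Rs: "1 \<le> R powr s" using R1 assms by (simp add: ge_one_powr_ge_zero)
    have "R powr s * (A + \<bar>M\<bar> + 2 * c0) = c0 * (R powr s * K)"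
      using assms by (simp add: K_def)
    also have "\<dots> \<le> c0 * (R powr s * R powr (p - s))"
      using KR Rs assms by (intro mult_left_mono) auto
    also have "\<dots> = c0 * R powr p"
      using R1 by (simp flip: powr_add)
    finally have "R powr s * (A + \<bar>M\<bar> + 2 * c0) \<le> c0 * R powr p" .
    moreover have "\<bar>M\<bar> + 2 * c0 \<le> R powr s * (\<bar>M\<bar> + 2 * c0)"
      using mult_right_mono[OF Rs, of "\<bar>M\<bar> + 2 * c0"] assms by simp
    ultimately show "M \<le> c0 * (R powr p - 1) - A * R powr s"
      using abs_ge_self[of M] assms(1) by (simp add: algebra_simps)
  qed
qed

lemma coercive_onI:
  fixes \<phi> :: "real \<Rightarrow> real"
  assumes "0 < C" "filterlim \<phi> at_top at_top"
    and "\<And>y. y \<in> A \<Longrightarrow> \<exists>R. nrm y \<le> C * R \<and> ereal (\<phi> R) \<le> I y"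
  shows "coercive_on A nrm I"
  unfolding coercive_on_def
proof
  fix M :: real
  obtain R0 where R0: "\<And>R. R0 \<le> R \<Longrightarrow> M + 1 \<le> \<phi> R"
    using assms(2) unfolding filterlim_at_top eventually_at_top_linorder by blast
  show "\<exists>R. \<forall>y\<in>A. R < nrm y \<longrightarrow> ereal M < I y"
  proof (intro exI ballI impI)
    fix y assume "y \<in> A" "C * R0 < nrm y"
    then obtain R where "C * R0 < C * R" "ereal (\<phi> R) \<le> I y"
      using assms(3) by force
    then have "ereal M < ereal (\<phi> R)" "ereal (\<phi> R) \<le> I y"
      using R0[of R] assms(1) by auto
    then show "ereal M < I y" by (rule less_le_trans)
  qed
qed

section \<open>Integral estimates\<close>

lemma abs_integral_le_nn_integral:
  fixes h :: "'a \<Rightarrow> real"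
  shows "ennreal \<bar>integral\<^sup>L M h\<bar> \<le> (\<integral>\<^sup>+x. ennreal \<bar>h x\<bar> \<partial>M)"
proof (cases "integrable M h")
  case True
  then show ?thesis using integral_norm_bound_ennreal[OF True] by simp
qed (simp add: not_integrable_integral_eq)

lemma nn_integral_indicator_const:
  fixes a b c :: real
  assumes "a \<le> b" "0 \<le> c"
  shows "(\<integral>\<^sup>+\<tau>. ennreal (indicator {a..b} \<tau> * c) \<partial>lborel) = ennreal ((b - a) * c)"
proof -
  have "(\<integral>\<^sup>+\<tau>. ennreal (indicator {a..b} \<tau> * c) \<partial>lborel) = (\<integral>\<^sup>+\<tau>. ennreal c * indicator {a..b} \<tau> \<partial>lborel)"
    by (intro nn_integral_cong) (auto simp: indicator_def)
  also have "\<dots> = ennreal ((b - a) * c)"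
    using assms by (simp add: nn_integral_cmult_indicator ennreal_mult'[symmetric] mult.commute)
  finally show ?thesis .
qed

lemma powr_indicator_mult:
  fixes x r :: real
  assumes "0 \<le> x" "0 < r"
  shows "(indicator S s * x) powr r = indicator S s * x powr r"
  using assms by (auto simp: indicator_def)

text \<open>Hoelder's inequality without integrability hypotheses: the \<open>q\<close>-th and \<open>p\<close>-th powers of
  the factors only need measurable majorants. It follows from Young's inequality for \<open>u/\<kappa>\<close>
  and \<open>v/\<rho>\<close>.\<close>
lemma abs_integral_le_Young:
  fixes h u v U V :: "real \<Rightarrow> real" and p q \<kappa> \<rho> :: real
  assumes pq: "1 < p" "q = p / (p - 1)" and "0 < \<kappa>" "0 < \<rho>"
    and uv: "\<And>x. 0 \<le> u x" "\<And>x. 0 \<le> v x"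
    and hb: "AE x in lborel. \<bar>h x\<bar> \<le> u x * v x"
    and Um: "U \<in> borel_measurable lborel" and Vm: "V \<in> borel_measurable lborel"
    and Ub: "\<And>x. u x powr q \<le> U x" and Vb: "\<And>x. v x powr p \<le> V x"
    and UI: "(\<integral>\<^sup>+x. ennreal (U x) \<partial>lborel) \<le> ennreal (\<kappa> powr q)"
    and VI: "(\<integral>\<^sup>+x. ennreal (V x) \<partial>lborel) \<le> ennreal (\<rho> powr p)"
  shows "\<bar>integral\<^sup>L lborel h\<bar> \<le> \<kappa> * \<rho>"
proof -
  note q = conjugate_exponent[OF pq]
  define c1 where "c1 = \<kappa> * \<rho> / (q * \<kappa> powr q)"
  define c2 where "c2 = \<kappa> * \<rho> / (p * \<rho> powr p)"
  have c: "0 \<le> c1" "0 \<le> c2" using assms q by (auto simp: c1_def c2_def)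
  have U0: "0 \<le> U x" for x by (rule order_trans[OF _ Ub]) simp
  have V0: "0 \<le> V x" for x by (rule order_trans[OF _ Vb]) simp
  have uv_le: "u x * v x \<le> c1 * U x + c2 * V x" for x
  proof -
    have "u x * v x = \<kappa> * \<rho> * ((v x / \<rho>) * (u x / \<kappa>))" using assms by simp
    also have "\<dots> \<le> \<kappa> * \<rho> * ((v x / \<rho>) powr p / p + (u x / \<kappa>) powr q / q)"
      using Youngs_inequality[OF pq(1) q(1) q(2), of "v x / \<rho>" "u x / \<kappa>"] assms
      by (intro mult_left_mono) auto
    also have "\<dots> = \<kappa> * \<rho> * (v x powr p / (p * \<rho> powr p) + u x powr q / (q * \<kappa> powr q))"
      using assms by (simp add: powr_divide mult.commute)
    also have "\<dots> \<le> \<kappa> * \<rho> * (V x / (p * \<rho> powr p) + U x / (q * \<kappa> powr q))"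
      using assms q Ub[of x] Vb[of x]
      by (intro mult_left_mono add_mono divide_right_mono) auto
    also have "\<dots> = c1 * U x + c2 * V x" by (simp add: c1_def c2_def field_simps)
    finally show ?thesis .
  qed
  have "ennreal \<bar>integral\<^sup>L lborel h\<bar> \<le> (\<integral>\<^sup>+x. ennreal \<bar>h x\<bar> \<partial>lborel)"
    by (rule abs_integral_le_nn_integral)
  also have "\<dots> \<le> (\<integral>\<^sup>+x. ennreal c1 * ennreal (U x) + ennreal c2 * ennreal (V x) \<partial>lborel)"
    using hb
  proof (intro nn_integral_mono_AE, eventually_elim)
    case (elim x)
    then have "\<bar>h x\<bar> \<le> c1 * U x + c2 * V x" using uv_le[of x] by linarith
    then show ?case using c U0[of x] V0[of x]
      by (simp add: ennreal_mult'[symmetric] ennreal_plus[symmetric] del: ennreal_plus)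
  qed
  also have "\<dots> = ennreal c1 * (\<integral>\<^sup>+x. ennreal (U x) \<partial>lborel) + ennreal c2 * (\<integral>\<^sup>+x. ennreal (V x) \<partial>lborel)"
    using Um Vm by (simp add: nn_integral_add nn_integral_cmult)
  also have "\<dots> \<le> ennreal c1 * ennreal (\<kappa> powr q) + ennreal c2 * ennreal (\<rho> powr p)"
    by (intro add_mono mult_left_mono UI VI) auto
  also have "\<dots> = ennreal (\<kappa> * \<rho> * (1 / p + 1 / q))"
    using c assms q
    by (simp add: c1_def c2_def field_simps ennreal_mult'[symmetric] ennreal_plus[symmetric] del: ennreal_plus)
  finally show ?thesis using assms q by (simp add: ennreal_le_iff)
qed

lemma Lp_norm_le_of_abs_le:
  fixes a b p B :: real and y :: "real \<Rightarrow> real"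
  assumes "a \<le> b" "0 < p" "0 \<le> B" "\<And>t. t \<in> {a..b} \<Longrightarrow> \<bar>y t\<bar> \<le> B"
  shows "Lp_norm p a b y \<le> (b - a) powr (1/p) * B"
proof -
  have "ennreal \<bar>LINT t:{a..b}|lborel. \<bar>y t\<bar> powr p\<bar> \<le> (\<integral>\<^sup>+t. ennreal \<bar>indicator {a..b} t *\<^sub>R \<bar>y t\<bar> powr p\<bar> \<partial>lborel)"
    unfolding set_lebesgue_integral_def by (rule abs_integral_le_nn_integral)
  also have "\<dots> \<le> (\<integral>\<^sup>+t. ennreal (indicator {a..b} t * B powr p) \<partial>lborel)"
    using assms by (intro nn_integral_mono) (auto simp: indicator_def intro!: powr_mono2)
  also have "\<dots> = ennreal ((b - a) * B powr p)" using assms by (simp add: nn_integral_indicator_const)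
  finally have "\<bar>LINT t:{a..b}|lborel. \<bar>y t\<bar> powr p\<bar> \<le> (b - a) * B powr p"
    using assms by (simp add: ennreal_le_iff)
  moreover have "0 \<le> (LINT t:{a..b}|lborel. \<bar>y t\<bar> powr p)"
    unfolding set_lebesgue_integral_def by (intro integral_nonneg_AE) (auto simp: indicator_def)
  ultimately have "Lp_norm p a b y \<le> ((b - a) * B powr p) powr (1/p)"
    unfolding Lp_norm_def using assms by (intro powr_mono2) auto
  also have "\<dots> = (b - a) powr (1/p) * B" using assms by (simp add: powr_mult powr_powr)
  finally show ?thesis .
qed

text \<open>The factor \<open>2\<close> comes from bounding the positive and the negative part of \<open>f\<close>
  separately by means of \<open>S\<close>.\<close>
lemma ext_integral_ge:
  fixes a b Hval \<beta> :: real and f H S :: "real \<Rightarrow> real"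
  assumes Hm: "H \<in> borel_measurable lborel" and Sm: "S \<in> borel_measurable lborel"
    and H0: "\<And>t. 0 \<le> H t" and S0: "\<And>t. 0 \<le> S t"
    and HI: "(\<integral>\<^sup>+t. ennreal (H t) \<partial>lborel) = ennreal Hval"
    and SI: "(\<integral>\<^sup>+t. ennreal (S t) \<partial>lborel) \<le> ennreal \<beta>" and "0 \<le> \<beta>"
    and Hout: "\<And>t. t \<notin> {a..b} \<Longrightarrow> H t = 0"
    and fb: "AE t in lborel. t \<in> {a..b} \<longrightarrow> H t - S t \<le> f t"
  shows "ereal (Hval - 2 * \<beta>) \<le> ext_integral a b f"
proof -
  define A where "A = (\<integral>\<^sup>+ t\<in>{a..b}. ennreal (f t) \<partial>lborel)"
  define B where "B = (\<integral>\<^sup>+ t\<in>{a..b}. ennreal (- f t) \<partial>lborel)"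
  have "B \<le> (\<integral>\<^sup>+t. ennreal (S t) \<partial>lborel)"
    unfolding B_def using fb
  proof (intro nn_integral_mono_AE, eventually_elim)
    case (elim t)
    then show ?case using H0[of t] by (cases "t \<in> {a..b}") (auto intro: ennreal_leI)
  qed
  with SI have "B \<le> ennreal \<beta>" by (blast intro: order_trans)
  then obtain bb where bb: "B = ennreal bb" "0 \<le> bb" "bb \<le> \<beta>"
    using \<open>0 \<le> \<beta>\<close> by (cases B) (auto simp: top_unique)
  define h where "h = (\<lambda>t. max 0 (H t - S t))"
  have "ennreal Hval \<le> (\<integral>\<^sup>+t. ennreal (h t) + ennreal (S t) \<partial>lborel)"
    unfolding HI[symmetric]
    by (intro nn_integral_mono) (auto simp: h_def S0 ennreal_plus[symmetric] simp del: ennreal_plus intro!: ennreal_leI)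
  also have "\<dots> = (\<integral>\<^sup>+t. ennreal (h t) \<partial>lborel) + (\<integral>\<^sup>+t. ennreal (S t) \<partial>lborel)"
    using Hm Sm by (simp add: h_def nn_integral_add)
  also have "(\<integral>\<^sup>+t. ennreal (h t) \<partial>lborel) \<le> A"
    unfolding A_def using fb
  proof (intro nn_integral_mono_AE, eventually_elim)
    case (elim t)
    show ?case
    proof (cases "t \<in> {a..b}")
      case True
      then have "ennreal (h t) \<le> ennreal (max 0 (f t))" using elim by (auto simp: h_def intro: ennreal_leI)
      then show ?thesis using True by (simp add: max_def ennreal_neg split: if_splits)
    qed (simp add: h_def Hout S0)
  qed
  finally have AH: "ennreal Hval \<le> A + ennreal \<beta>" using SI by (auto intro: order_trans add_left_mono)
  show ?thesis
  proof (cases A)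
    case (real aa)
    have "Hval \<le> aa + \<beta>"
      using AH real \<open>0 \<le> \<beta>\<close> by (cases "0 \<le> Hval") (auto simp: ennreal_plus[symmetric] simp del: ennreal_plus)
    then show ?thesis
      unfolding ext_integral_def A_def[symmetric] B_def[symmetric] using real bb by simp
  qed (simp add: ext_integral_def A_def[symmetric] B_def[symmetric] bb)
qed

section \<open>The operator \<open>K\<^sub>P\<close> and Sobolev functions\<close>

definition lower_triangle :: "real \<Rightarrow> real \<Rightarrow> (real \<times> real) set" where
  "lower_triangle a b = {(t, \<tau>). a \<le> \<tau> \<and> \<tau> < t \<and> t \<le> b}"

text \<open>The \<open>q\<close>-th power of the \<open>L\<^sup>q\<close>-norm of the two sections of \<open>k\<close> through \<open>t\<close>;
  by Hoelder's inequality its \<open>q\<close>-th root controls \<open>K\<^sub>P[f](t)\<close>.\<close>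
definition section_weight :: "(real \<times> real) set \<Rightarrow> (real \<times> real \<Rightarrow> real) \<Rightarrow> real \<Rightarrow> real \<Rightarrow> ennreal" where
  "section_weight D k q t = (\<integral>\<^sup>+\<tau>. ennreal (indicator D (t, \<tau>) * \<bar>k (t, \<tau>)\<bar> powr q) \<partial>lborel)
     + (\<integral>\<^sup>+\<tau>. ennreal (indicator D (\<tau>, t) * \<bar>k (\<tau>, t)\<bar> powr q) \<partial>lborel)"

lemma
  fixes k :: "real \<times> real \<Rightarrow> real"
  assumes "(\<lambda>z. indicator D z * \<bar>k z\<bar> powr q) \<in> borel_measurable lborel"
  shows borel_measurable_section_weight: "section_weight D k q \<in> borel_measurable lborel"
    and nn_integral_section_weight:
      "(\<integral>\<^sup>+t. section_weight D k q t \<partial>lborel) = 2 * (\<integral>\<^sup>+z. ennreal (indicator D z * \<bar>k z\<bar> powr q) \<partial>lborel)"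
proof -
  define kq where "kq = (\<lambda>z. ennreal (indicator D z * \<bar>k z\<bar> powr q))"
  have m: "kq \<in> borel_measurable (lborel \<Otimes>\<^sub>M lborel)"
    using assms by (simp add: kq_def lborel_prod)
  have m': "(\<lambda>z. kq (snd z, fst z)) \<in> borel_measurable (lborel \<Otimes>\<^sub>M lborel)"
    using m by measurable
  have fst: "(\<lambda>t. \<integral>\<^sup>+\<tau>. kq (t, \<tau>) \<partial>lborel) \<in> borel_measurable lborel"
    using lborel.borel_measurable_nn_integral_fst[OF m] by simp
  have snd: "(\<lambda>t. \<integral>\<^sup>+\<tau>. kq (\<tau>, t) \<partial>lborel) \<in> borel_measurable lborel"
    using lborel.borel_measurable_nn_integral_fst[OF m'] by simp
  show "section_weight D k q \<in> borel_measurable lborel"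
    unfolding section_weight_def[abs_def] using borel_measurable_add[OF fst snd] by (simp add: kq_def)
  have "(\<integral>\<^sup>+t. section_weight D k q t \<partial>lborel)
      = (\<integral>\<^sup>+t. \<integral>\<^sup>+\<tau>. kq (t, \<tau>) \<partial>lborel \<partial>lborel) + (\<integral>\<^sup>+t. \<integral>\<^sup>+\<tau>. kq (\<tau>, t) \<partial>lborel \<partial>lborel)"
    using fst snd by (simp add: section_weight_def kq_def nn_integral_add)
  also have "\<dots> = (\<integral>\<^sup>+z. kq z \<partial>lborel) + (\<integral>\<^sup>+z. kq z \<partial>lborel)"
    using lborel.nn_integral_fst[OF m] lborel_pair.nn_integral_snd[OF m] by (simp add: lborel_prod)
  finally show "(\<integral>\<^sup>+t. section_weight D k q t \<partial>lborel) = 2 * (\<integral>\<^sup>+z. ennreal (indicator D z * \<bar>k z\<bar> powr q) \<partial>lborel)"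
    by (simp add: kq_def mult_2)
qed

lemma abs_KP_le:
  fixes k :: "real \<times> real \<Rightarrow> real" and f V :: "real \<Rightarrow> real"
  assumes pq: "1 < p" "q = p / (p - 1)" and t: "t \<in> {a..b}"
    and kq: "(\<lambda>z. indicator (lower_triangle a b) z * \<bar>k z\<bar> powr q) \<in> borel_measurable lborel"
    and W: "section_weight (lower_triangle a b) k q t \<le> ennreal (\<kappa> powr q)" and "0 < \<kappa>"
    and Vm: "V \<in> borel_measurable lborel"
    and Vb: "\<And>\<tau>. indicator {a..b} \<tau> * \<bar>f \<tau>\<bar> powr p \<le> V \<tau>"
    and VI: "(\<integral>\<^sup>+\<tau>. ennreal (V \<tau>) \<partial>lborel) \<le> ennreal (\<rho> powr p)" and "0 < \<rho>"
  shows "\<bar>KP lam mu k a b f t\<bar> \<le> (\<bar>lam\<bar> + \<bar>mu\<bar>) * (\<kappa> * \<rho>)"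
proof -
  note q = conjugate_exponent[OF pq]
  define U1 where "U1 = (\<lambda>\<tau>. indicator (lower_triangle a b) (t, \<tau>) * \<bar>k (t, \<tau>)\<bar> powr q)"
  define U2 where "U2 = (\<lambda>\<tau>. indicator (lower_triangle a b) (\<tau>, t) * \<bar>k (\<tau>, t)\<bar> powr q)"
  have U1m: "U1 \<in> borel_measurable lborel" and U2m: "U2 \<in> borel_measurable lborel"
    using kq by (simp_all add: U1_def U2_def lborel_prod[symmetric])
  have "(\<integral>\<^sup>+x. ennreal (U1 x) \<partial>lborel) \<le> section_weight (lower_triangle a b) k q t"
    unfolding section_weight_def U1_def by (rule add_increasing2[OF zero_le order_refl])
  with W have UI1: "(\<integral>\<^sup>+x. ennreal (U1 x) \<partial>lborel) \<le> ennreal (\<kappa> powr q)"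
    by (rule order_trans[rotated])
  have "(\<integral>\<^sup>+x. ennreal (U2 x) \<partial>lborel) \<le> section_weight (lower_triangle a b) k q t"
    unfolding section_weight_def U2_def by (rule add_increasing[OF zero_le order_refl])
  with W have UI2: "(\<integral>\<^sup>+x. ennreal (U2 x) \<partial>lborel) \<le> ennreal (\<kappa> powr q)"
    by (rule order_trans[rotated])
  have Vb': "(indicator {a..b} x * \<bar>f x\<bar>) powr p \<le> V x" for x
    using Vb[of x] pq by (subst powr_indicator_mult) auto
  have left: "\<bar>LINT \<tau>:{a..t}|lborel. k (t, \<tau>) * f \<tau>\<bar> \<le> \<kappa> * \<rho>"
    unfolding set_lebesgue_integral_def
  proof (rule abs_integral_le_Young[OF pq \<open>0 < \<kappa>\<close> \<open>0 < \<rho>\<close>,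
        where u = "\<lambda>\<tau>. indicator (lower_triangle a b) (t, \<tau>) * \<bar>k (t, \<tau>)\<bar>"
          and v = "\<lambda>\<tau>. indicator {a..b} \<tau> * \<bar>f \<tau>\<bar>" and U = U1 and V = V])
    show "AE x in lborel. \<bar>indicator {a..t} x *\<^sub>R (k (t, x) * f x)\<bar>
          \<le> indicator (lower_triangle a b) (t, x) * \<bar>k (t, x)\<bar> * (indicator {a..b} x * \<bar>f x\<bar>)"
      using AE_lborel_singleton[of t]
      by eventually_elim (use t in \<open>auto simp: indicator_def lower_triangle_def abs_mult\<close>)
    show "(indicator (lower_triangle a b) (t, x) * \<bar>k (t, x)\<bar>) powr q \<le> U1 x" for x
      using q by (subst powr_indicator_mult) (auto simp: U1_def)
  qed (use U1m Vm Vb' UI1 VI in auto)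
  have right: "\<bar>LINT \<tau>:{t..b}|lborel. k (\<tau>, t) * f \<tau>\<bar> \<le> \<kappa> * \<rho>"
    unfolding set_lebesgue_integral_def
  proof (rule abs_integral_le_Young[OF pq \<open>0 < \<kappa>\<close> \<open>0 < \<rho>\<close>,
        where u = "\<lambda>\<tau>. indicator (lower_triangle a b) (\<tau>, t) * \<bar>k (\<tau>, t)\<bar>"
          and v = "\<lambda>\<tau>. indicator {a..b} \<tau> * \<bar>f \<tau>\<bar>" and U = U2 and V = V])
    show "AE x in lborel. \<bar>indicator {t..b} x *\<^sub>R (k (x, t) * f x)\<bar>
          \<le> indicator (lower_triangle a b) (x, t) * \<bar>k (x, t)\<bar> * (indicator {a..b} x * \<bar>f x\<bar>)"
      using AE_lborel_singleton[of t]
      by eventually_elim (use t in \<open>auto simp: indicator_def lower_triangle_def abs_mult\<close>)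
    show "(indicator (lower_triangle a b) (x, t) * \<bar>k (x, t)\<bar>) powr q \<le> U2 x" for x
      using q by (subst powr_indicator_mult) (auto simp: U2_def)
  qed (use U2m Vm Vb' UI2 VI in auto)
  have "\<bar>KP lam mu k a b f t\<bar> \<le> \<bar>lam\<bar> * \<bar>LINT \<tau>:{a..t}|lborel. k (t, \<tau>) * f \<tau>\<bar>
        + \<bar>mu\<bar> * \<bar>LINT \<tau>:{t..b}|lborel. k (\<tau>, t) * f \<tau>\<bar>"
    unfolding KP_def by (simp add: abs_mult[symmetric] abs_triangle_ineq)
  also have "\<dots> \<le> (\<bar>lam\<bar> + \<bar>mu\<bar>) * (\<kappa> * \<rho>)"
    using left right by (simp add: distrib_right add_mono mult_left_mono)
  finally show ?thesis .
qed

lemma is_wderiv_wderiv: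
  assumes "y \<in> W1p p a b"
  shows "is_wderiv p a b y (wderiv p a b y)"
proof -
  obtain g where "is_wderiv p a b y g" using assms by (auto simp: W1p_def)
  then show ?thesis unfolding wderiv_def by (rule someI[of "is_wderiv p a b y"])
qed

definition W1p_radius :: "real \<Rightarrow> real \<Rightarrow> real \<Rightarrow> (real \<Rightarrow> real) \<Rightarrow> real" where
  "W1p_radius p a b y = ((LINT t:{a..b}|lborel. \<bar>wderiv p a b y t\<bar> powr p) + 1) powr (1 / p)"

lemma integral_wderiv_powr_nonneg: "0 \<le> (LINT t:{a..b}|lborel. \<bar>wderiv p a b y t\<bar> powr p)"
  unfolding set_lebesgue_integral_def by (intro integral_nonneg_AE) (auto simp: indicator_def)

lemma W1p_radius_ge_one: "0 < p \<Longrightarrow> 1 \<le> W1p_radius p a b y"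
  using integral_wderiv_powr_nonneg by (simp add: W1p_radius_def ge_one_powr_ge_zero)

lemma W1p_radius_powr:
  "0 < p \<Longrightarrow> W1p_radius p a b y powr p = (LINT t:{a..b}|lborel. \<bar>wderiv p a b y t\<bar> powr p) + 1"
  using integral_wderiv_powr_nonneg by (simp add: W1p_radius_def powr_powr)

lemma
  assumes "y \<in> W1p p a b"
  shows borel_measurable_wderiv_powr:
      "(\<lambda>t. indicator {a..b} t * \<bar>wderiv p a b y t\<bar> powr p) \<in> borel_measurable lborel"
    and nn_integral_wderiv_powr:
      "(\<integral>\<^sup>+t. ennreal (indicator {a..b} t * \<bar>wderiv p a b y t\<bar> powr p) \<partial>lborel)
        = ennreal (LINT t:{a..b}|lborel. \<bar>wderiv p a b y t\<bar> powr p)"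
proof -
  have int: "integrable lborel (\<lambda>t. indicator {a..b} t * \<bar>wderiv p a b y t\<bar> powr p)"
    using is_wderiv_wderiv[OF assms] by (simp add: is_wderiv_def Lp_on_def set_integrable_def)
  then show "(\<lambda>t. indicator {a..b} t * \<bar>wderiv p a b y t\<bar> powr p) \<in> borel_measurable lborel"
    by (rule borel_measurable_integrable)
  show "(\<integral>\<^sup>+t. ennreal (indicator {a..b} t * \<bar>wderiv p a b y t\<bar> powr p) \<partial>lborel)
        = ennreal (LINT t:{a..b}|lborel. \<bar>wderiv p a b y t\<bar> powr p)"
    using nn_integral_eq_integral[OF int] by (simp add: set_lebesgue_integral_def)
qed

lemma nn_integral_wderiv_powr_le:
  "y \<in> W1p p a b \<Longrightarrow> 0 < p \<Longrightarrow>
    (\<integral>\<^sup>+t. ennreal (indicator {a..b} t * \<bar>wderiv p a b y t\<bar> powr p) \<partial>lborel) \<le> ennreal (W1p_radius p a b y powr p)"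
  by (simp add: nn_integral_wderiv_powr W1p_radius_powr ennreal_leI)

lemma W1p_abs_le:
  assumes y: "y \<in> W1p p a b" and "a \<le> b" "1 < p" and t: "t \<in> {a..b}"
  shows "\<bar>y t\<bar> \<le> (\<bar>y a\<bar> + (b - a) + 1) * W1p_radius p a b y"
proof -
  define q where "q = p / (p - 1)"
  define g where "g = wderiv p a b y"
  define R where "R = W1p_radius p a b y"
  have pq: "1 < p" "q = p / (p - 1)" using assms by (simp_all add: q_def)
  have q: "1 < q" using conjugate_exponent[OF pq] by simp
  have R: "1 \<le> R" using W1p_radius_ge_one assms by (simp add: R_def)
  have "b - a + 1 \<le> (b - a + 1) powr q"
    using powr_mono[of 1 q "b - a + 1"] q \<open>a \<le> b\<close> by simp
  then have box: "(\<integral>\<^sup>+x. ennreal (indicator {a..b} x) \<partial>lborel) \<le> ennreal ((b - a + 1) powr q)"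
    using nn_integral_indicator_const[of a b 1] \<open>a \<le> b\<close> by (simp add: ennreal_leI)
  have "\<bar>LINT s:{a..t}|lborel. g s\<bar> \<le> (b - a + 1) * R"
    unfolding set_lebesgue_integral_def
  proof (rule abs_integral_le_Young[OF pq, where u = "indicator {a..b}"
        and v = "\<lambda>\<tau>. indicator {a..b} \<tau> * \<bar>g \<tau>\<bar>" and U = "indicator {a..b}"
        and V = "\<lambda>\<tau>. indicator {a..b} \<tau> * \<bar>g \<tau>\<bar> powr p"])
    show "AE x in lborel. \<bar>indicator {a..t} x *\<^sub>R g x\<bar> \<le> indicator {a..b} x * (indicator {a..b} x * \<bar>g x\<bar>)"
      using t by (auto simp: indicator_def)
    show "indicator {a..b} x powr q \<le> indicator {a..b} x" for x :: real
      by (auto simp: indicator_def)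
    show "(indicator {a..b} x * \<bar>g x\<bar>) powr p \<le> indicator {a..b} x * \<bar>g x\<bar> powr p" for x
      using pq by (subst powr_indicator_mult) auto
    show "(\<lambda>\<tau>. indicator {a..b} \<tau> * \<bar>g \<tau>\<bar> powr p) \<in> borel_measurable lborel"
      using borel_measurable_wderiv_powr[OF y] by (simp add: g_def)
    show "(\<integral>\<^sup>+x. ennreal (indicator {a..b} x * \<bar>g x\<bar> powr p) \<partial>lborel) \<le> ennreal (R powr p)"
      using nn_integral_wderiv_powr_le[OF y] pq by (simp add: g_def R_def)
    show "indicator {a..b} \<in> borel_measurable lborel"
      by measurable
    show "(\<integral>\<^sup>+x. ennreal (indicator {a..b} x) \<partial>lborel) \<le> ennreal ((b - a + 1) powr q)"
      by (fact box)
  qed (use R \<open>a \<le> b\<close> in auto)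
  moreover have "y t = y a + (LINT s:{a..t}|lborel. g s)"
    using is_wderiv_wderiv[OF y] t unfolding is_wderiv_def g_def by blast
  ultimately have "\<bar>y t\<bar> \<le> \<bar>y a\<bar> + (b - a + 1) * R" by linarith
  also have "\<dots> \<le> (\<bar>y a\<bar> + (b - a) + 1) * R"
    using R mult_right_mono[OF R, of "\<bar>y a\<bar>"] by (simp add: algebra_simps)
  finally show ?thesis by (simp add: R_def)
qed

lemma W1p_norm_le_radius:
  assumes y: "y \<in> W1p p a b" and "a \<le> b" "1 < p"
  shows "W1p_norm p a b y \<le> ((b - a) powr (1/p) * (\<bar>y a\<bar> + (b - a) + 1) + 1) * W1p_radius p a b y"
proof -
  define R where "R = W1p_radius p a b y"
  have R: "1 \<le> R" using W1p_radius_ge_one assms by (simp add: R_def)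
  have "Lp_norm p a b y \<le> (b - a) powr (1/p) * ((\<bar>y a\<bar> + (b - a) + 1) * R)"
  proof (rule Lp_norm_le_of_abs_le)
    show "\<bar>y t\<bar> \<le> (\<bar>y a\<bar> + (b - a) + 1) * R" if "t \<in> {a..b}" for t
      using W1p_abs_le[OF y assms(2,3) that] by (simp add: R_def)
  qed (use assms R in auto)
  moreover have "Lp_norm p a b (wderiv p a b y) \<le> R"
    unfolding Lp_norm_def R_def W1p_radius_def
    using integral_wderiv_powr_nonneg assms by (intro powr_mono2) auto
  ultimately show ?thesis by (simp add: W1p_norm_def R_def algebra_simps)
qed

section \<open>Coercivity\<close>

locale coercivity_hypotheses =
  fixes a b p q lam mu ya c0 :: real
    and k :: "real \<times> real \<Rightarrow> real"
    and F :: "real \<Rightarrow> real \<Rightarrow> real \<Rightarrow> real \<Rightarrow> real \<Rightarrow> real"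
    and N :: nat and c d1 d2 d3 d4 :: "nat \<Rightarrow> real"
  assumes ab: "a < b" and p: "1 < p" and q: "q = p / (p - 1)"
    and k_Lq: "set_integrable lborel (lower_triangle a b) (\<lambda>z. \<bar>k z\<bar> powr q)"
    and c0: "c0 > 0"
    and degrees: "\<forall>j\<in>{1..N}. 0 \<le> d1 j \<and> 0 \<le> d2 j \<and> d2 j \<le> q \<and> 0 \<le> d3 j \<and> d3 j \<le> p
           \<and> 0 \<le> d4 j \<and> d4 j \<le> q \<and> d2 j + (q / p) * d3 j + d4 j \<le> q
           \<and> 0 \<le> d1 j + d2 j + d3 j + d4 j \<and> d1 j + d2 j + d3 j + d4 j < p"
    and F_ge: "\<forall>x1 x2 x3 x4 t. t \<in> {a..b} \<longrightarrow>
           F x1 x2 x3 x4 t \<ge> c0 * \<bar>x3\<bar> powr p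
             + (\<Sum>j=1..N. c j * pw x1 (d1 j) * pw x2 (d2 j) * pw x3 (d3 j) * pw x4 (d4 j))"
begin

abbreviation admissible :: "(real \<Rightarrow> real) set" where
  "admissible \<equiv> {y \<in> W1p p a b. y a = ya}"

abbreviation radius :: "(real \<Rightarrow> real) \<Rightarrow> real" where
  "radius \<equiv> W1p_radius p a b"

text \<open>\<open>enn2real\<close> maps \<open>\<infinity>\<close> to \<open>0\<close>, but by \<open>section_weight_eq_weight\<close> this happens only on a
  null set.\<close>
definition weight :: "real \<Rightarrow> real" where
  "weight t = enn2real (section_weight (lower_triangle a b) k q t)"

text \<open>The \<open>0\<close> only matters for \<open>N = 0\<close>, where \<open>Max\<close> would be applied to the empty set.\<close>
definition degree :: real where
  "degree = Max (insert 0 ((\<lambda>j. d1 j + d2 j + d3 j + d4 j) ` {1..N}))"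

lemma q_gt_1: "1 < q"
  using conjugate_exponent[OF p q] by simp

lemma degree_nonneg: "0 \<le> degree"
  by (simp add: degree_def)

lemma degree_less: "degree < p"
  using degrees p by (simp add: degree_def)

lemma degree_ge: "j \<in> {1..N} \<Longrightarrow> d1 j + d2 j + d3 j + d4 j \<le> degree"
  unfolding degree_def by (intro Max_ge) auto

lemma weight_nonneg: "0 \<le> weight t"
  by (simp add: weight_def)

lemma kernel_measurable:
  "(\<lambda>z. indicator (lower_triangle a b) z * \<bar>k z\<bar> powr q) \<in> borel_measurable lborel"
  using borel_measurable_integrable[OF k_Lq[unfolded set_integrable_def]] by simp

lemma nn_integral_section_weight_finite:
  "(\<integral>\<^sup>+t. section_weight (lower_triangle a b) k q t \<partial>lborel) < \<infinity>"
proof -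
  have "(\<integral>\<^sup>+z. ennreal (indicator (lower_triangle a b) z * \<bar>k z\<bar> powr q) \<partial>lborel) < \<infinity>"
    using integrableD(2)[OF k_Lq[unfolded set_integrable_def]] by (simp add: top.not_eq_extremum)
  then show ?thesis
    by (simp add: nn_integral_section_weight[OF kernel_measurable] ennreal_mult_less_top)
qed

lemma section_weight_eq_weight:
  "AE t in lborel. section_weight (lower_triangle a b) k q t = ennreal (weight t)"
  using nn_integral_PInf_AE[OF borel_measurable_section_weight[OF kernel_measurable]]
    nn_integral_section_weight_finite
  by (auto simp: weight_def top.not_eq_extremum elim: AE_mp)

lemma weight_measurable: "weight \<in> borel_measurable lborel"
  using borel_measurable_section_weight[OF kernel_measurable] unfolding weight_def[abs_def] by measurable

lemma nn_integral_weight_finite: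
  "(\<integral>\<^sup>+t. ennreal (indicator {a..b} t * (weight t + 2)) \<partial>lborel) < \<infinity>"
proof -
  have "(\<integral>\<^sup>+t. ennreal (indicator {a..b} t * (weight t + 2)) \<partial>lborel)
      = (\<integral>\<^sup>+t. ennreal (indicator {a..b} t * weight t) + ennreal (indicator {a..b} t * 2) \<partial>lborel)"
    by (intro nn_integral_cong) (auto simp: indicator_def weight_nonneg ennreal_plus[symmetric] simp del: ennreal_plus)
  also have "\<dots> = (\<integral>\<^sup>+t. ennreal (indicator {a..b} t * weight t) \<partial>lborel) + ennreal ((b - a) * 2)"
    using weight_measurable ab by (simp add: nn_integral_add nn_integral_indicator_const)
  also have "(\<integral>\<^sup>+t. ennreal (indicator {a..b} t * weight t) \<partial>lborel)
      \<le> (\<integral>\<^sup>+t. section_weight (lower_triangle a b) k q t \<partial>lborel)"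
  proof (intro nn_integral_mono)
    fix t
    have "ennreal (indicator {a..b} t * weight t) \<le> ennreal (weight t)"
      using weight_nonneg[of t] by (intro ennreal_leI) (auto simp: indicator_def)
    also have "\<dots> \<le> section_weight (lower_triangle a b) k q t"
      by (simp add: weight_def ennreal_enn2real_if)
    finally show "ennreal (indicator {a..b} t * weight t) \<le> section_weight (lower_triangle a b) k q t" .
  qed
  finally show ?thesis
    using nn_integral_section_weight_finite by (auto intro: le_less_trans)
qed

definition weight_mass :: real where
  "weight_mass = enn2real (\<integral>\<^sup>+t. ennreal (indicator {a..b} t * (weight t + 2)) \<partial>lborel)"

lemma nn_integral_weight: "(\<integral>\<^sup>+t. ennreal (indicator {a..b} t * (weight t + 2)) \<partial>lborel) = ennreal weight_mass"
  using nn_integral_weight_finite by (simp add: weight_mass_def)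

definition sup_const :: real where
  "sup_const = \<bar>ya\<bar> + (b - a) + 1"

definition operator_const :: real where
  "operator_const = (\<bar>lam\<bar> + \<bar>mu\<bar>) * ((b - a + 1) powr (1/p) * sup_const) + 1"

definition monomial_const :: real where
  "monomial_const = (\<Sum>j=1..N. \<bar>c j\<bar> * (sup_const powr d1 j * operator_const powr (d2 j + d4 j)))"

lemma sup_const_ge_one: "1 \<le> sup_const"
  using ab by (simp add: sup_const_def)

lemma operator_const_pos: "0 < operator_const"
proof -
  have "0 \<le> (\<bar>lam\<bar> + \<bar>mu\<bar>) * ((b - a + 1) powr (1/p) * sup_const)"
    using sup_const_ge_one by simp
  then show ?thesis by (simp add: operator_const_def)
qed

lemma monomial_const_nonneg: "0 \<le> monomial_const"
  by (simp add: monomial_const_def sum_nonneg)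

lemma abs_le_sup_const: "y \<in> admissible \<Longrightarrow> t \<in> {a..b} \<Longrightarrow> \<bar>y t\<bar> \<le> sup_const * radius y"
  using W1p_abs_le[of y p a b t] ab p by (simp add: sup_const_def)

lemma abs_KP_BP_le:
  assumes y: "y \<in> admissible" and t: "t \<in> {a..b}"
    and finite: "section_weight (lower_triangle a b) k q t = ennreal (weight t)"
  shows "\<bar>KP lam mu k a b y t\<bar> \<le> operator_const * radius y * (weight t + 1) powr (1/q)"
    and "\<bar>BP lam mu k a b p y t\<bar> \<le> operator_const * radius y * (weight t + 1) powr (1/q)"
proof -
  have yW: "y \<in> W1p p a b" using y by simp
  define L where "L = \<bar>lam\<bar> + \<bar>mu\<bar>"
  define R where "R = radius y"
  define \<kappa> where "\<kappa> = (weight t + 1) powr (1/q)"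
  define \<rho> where "\<rho> = (b - a + 1) powr (1/p) * (sup_const * R)"
  have R: "1 \<le> R" using W1p_radius_ge_one p by (simp add: R_def)
  have \<kappa>: "0 < \<kappa>" using weight_nonneg[of t] by (simp add: \<kappa>_def)
  have "\<kappa> powr q = weight t + 1"
    using weight_nonneg[of t] q_gt_1 by (simp add: \<kappa>_def powr_powr)
  then have W: "section_weight (lower_triangle a b) k q t \<le> ennreal (\<kappa> powr q)"
    using finite by (simp add: ennreal_leI)
  have \<rho>: "0 < \<rho>" using ab sup_const_ge_one R by (simp add: \<rho>_def)
  have \<rho>p: "\<rho> powr p = (b - a + 1) * (sup_const * R) powr p"
    using ab p sup_const_ge_one R by (simp add: \<rho>_def powr_mult powr_powr)
  have "\<bar>KP lam mu k a b y t\<bar> \<le> L * (\<kappa> * \<rho>)"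
    unfolding L_def
  proof (rule abs_KP_le[OF p q t kernel_measurable W \<kappa> _ _ _ \<rho>])
    show "indicator {a..b} \<tau> * \<bar>y \<tau>\<bar> powr p \<le> indicator {a..b} \<tau> * (sup_const * R) powr p" for \<tau>
      using abs_le_sup_const[OF y, of \<tau>] p by (cases "\<tau> \<in> {a..b}") (auto simp: R_def intro: powr_mono2)
    show "(\<integral>\<^sup>+\<tau>. ennreal (indicator {a..b} \<tau> * (sup_const * R) powr p) \<partial>lborel) \<le> ennreal (\<rho> powr p)"
      using nn_integral_indicator_const[of a b "(sup_const * R) powr p"] ab \<rho>p
      by (simp add: ennreal_leI algebra_simps)
  qed simp
  moreover have "\<bar>BP lam mu k a b p y t\<bar> \<le> L * (\<kappa> * \<rho>)"
    unfolding L_def BP_def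
  proof (rule abs_KP_le[OF p q t kernel_measurable W \<kappa> borel_measurable_wderiv_powr[OF yW] order_refl _ \<rho>])
    have "1 * (sup_const * R) powr p \<le> (b - a + 1) * (sup_const * R) powr p"
      using ab by (intro mult_right_mono) auto
    moreover have "R powr p \<le> (sup_const * R) powr p"
      using sup_const_ge_one R p by (intro powr_mono2) auto
    ultimately have "R powr p \<le> \<rho> powr p"
      using \<rho>p by simp
    then show "(\<integral>\<^sup>+\<tau>. ennreal (indicator {a..b} \<tau> * \<bar>wderiv p a b y \<tau>\<bar> powr p) \<partial>lborel) \<le> ennreal (\<rho> powr p)"
      using nn_integral_wderiv_powr_le[OF yW] p by (auto simp: R_def intro: order_trans ennreal_leI)
  qed
  moreover have "L * (\<kappa> * \<rho>) \<le> operator_const * R * \<kappa>"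
  proof -
    have "L * (\<kappa> * \<rho>) = (L * ((b - a + 1) powr (1/p) * sup_const)) * (R * \<kappa>)"
      by (simp add: \<rho>_def mult_ac)
    also have "\<dots> \<le> operator_const * (R * \<kappa>)"
      using \<kappa> R by (intro mult_right_mono) (auto simp: operator_const_def L_def)
    finally show ?thesis by (simp add: mult_ac)
  qed
  ultimately show "\<bar>KP lam mu k a b y t\<bar> \<le> operator_const * radius y * (weight t + 1) powr (1/q)"
    and "\<bar>BP lam mu k a b p y t\<bar> \<le> operator_const * radius y * (weight t + 1) powr (1/q)"
    by (simp_all add: R_def \<kappa>_def)
qed

lemma monomial_sum_ge:
  assumes "\<bar>x1\<bar> \<le> sup_const * R" "\<bar>x2\<bar> \<le> operator_const * R * u powr (1/q)"
    and "\<bar>x4\<bar> \<le> operator_const * R * u powr (1/q)" and "1 \<le> u" "1 \<le> R"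
  shows "- (monomial_const * R powr degree * (u + \<bar>x3\<bar> powr p / R powr p + 1))
         \<le> (\<Sum>j=1..N. c j * pw x1 (d1 j) * pw x2 (d2 j) * pw x3 (d3 j) * pw x4 (d4 j))"
proof -
  define Z where "Z = R powr degree * (u + \<bar>x3\<bar> powr p / R powr p + 1)"
  have "- (\<bar>c j\<bar> * (sup_const powr d1 j * operator_const powr (d2 j + d4 j)) * Z)
      \<le> c j * pw x1 (d1 j) * pw x2 (d2 j) * pw x3 (d3 j) * pw x4 (d4 j)" if j: "j \<in> {1..N}" for j
  proof -
    define P where "P = pw x1 (d1 j) * pw x2 (d2 j) * pw x3 (d3 j) * pw x4 (d4 j)"
    have d: "0 \<le> d1 j" "0 \<le> d2 j" "0 \<le> d3 j" "0 \<le> d4 j" "d2 j + (q / p) * d3 j + d4 j \<le> q"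
      using degrees j by auto
    have "(d2 j + d4 j) / q + d3 j / p = (d2 j + (q / p) * d3 j + d4 j) / q"
      using q_gt_1 p by (simp add: field_simps)
    also have "\<dots> \<le> 1" using d(5) q_gt_1 by simp
    finally have "P \<le> sup_const powr d1 j * operator_const powr (d2 j + d4 j) * Z"
      unfolding P_def Z_def mult.assoc[symmetric]
      using pw_product_le[OF assms(1-5)] sup_const_ge_one operator_const_pos q_gt_1 p d degree_ge[OF j]
      by auto
    then have "\<bar>c j\<bar> * P \<le> \<bar>c j\<bar> * (sup_const powr d1 j * operator_const powr (d2 j + d4 j) * Z)"
      by (rule mult_left_mono) simp
    moreover have "- (\<bar>c j\<bar> * P) \<le> c j * P"
      using mult_right_mono[OF abs_ge_minus_self[of "c j"], of P] by (simp add: P_def pw_nonneg)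
    ultimately show ?thesis by (simp add: P_def mult_ac)
  qed
  then have "(\<Sum>j=1..N. - (\<bar>c j\<bar> * (sup_const powr d1 j * operator_const powr (d2 j + d4 j)) * Z))
      \<le> (\<Sum>j=1..N. c j * pw x1 (d1 j) * pw x2 (d2 j) * pw x3 (d3 j) * pw x4 (d4 j))"
    by (rule sum_mono)
  then show ?thesis
    by (simp add: Z_def monomial_const_def sum_distrib_right sum_negf mult.assoc)
qed

lemma integrand_ge:
  assumes y: "y \<in> admissible" and t: "t \<in> {a..b}"
    and finite: "section_weight (lower_triangle a b) k q t = ennreal (weight t)"
  shows "c0 * \<bar>wderiv p a b y t\<bar> powr p
       - monomial_const * radius y powr degree
         * (weight t + 2 + \<bar>wderiv p a b y t\<bar> powr p / radius y powr p)
     \<le> F (y t) (KP lam mu k a b y t) (wderiv p a b y t) (BP lam mu k a b p y t) t"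
proof -
  define X where "X = \<bar>wderiv p a b y t\<bar> powr p / radius y powr p"
  have bound: "- (monomial_const * radius y powr degree * (weight t + 1 + X + 1))
      \<le> (\<Sum>j=1..N. c j * pw (y t) (d1 j) * pw (KP lam mu k a b y t) (d2 j)
            * pw (wderiv p a b y t) (d3 j) * pw (BP lam mu k a b p y t) (d4 j))"
    unfolding X_def
    using abs_le_sup_const[OF y t] abs_KP_BP_le[OF assms] weight_nonneg[of t]
      W1p_radius_ge_one[of p a b y] p
    by (intro monomial_sum_ge) auto
  have two: "weight t + 1 + X + 1 = weight t + 2 + X" by simp
  have "c0 * \<bar>wderiv p a b y t\<bar> powr p
      + (\<Sum>j=1..N. c j * pw (y t) (d1 j) * pw (KP lam mu k a b y t) (d2 j)
            * pw (wderiv p a b y t) (d3 j) * pw (BP lam mu k a b p y t) (d4 j))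
      \<le> F (y t) (KP lam mu k a b y t) (wderiv p a b y t) (BP lam mu k a b p y t) t"
    using F_ge t by blast
  with bound[unfolded two] show ?thesis
    unfolding X_def by linarith
qed

lemma nn_integral_slack_le:
  assumes "y \<in> W1p p a b"
  shows "(\<integral>\<^sup>+t. ennreal (indicator {a..b} t * (weight t + 2)
            + indicator {a..b} t * \<bar>wderiv p a b y t\<bar> powr p / radius y powr p) \<partial>lborel)
         \<le> ennreal (weight_mass + 1)"
proof -
  define R where "R = radius y"
  have R: "1 \<le> R" using W1p_radius_ge_one p by (simp add: R_def)
  have "(\<integral>\<^sup>+t. ennreal (indicator {a..b} t * (weight t + 2)
          + indicator {a..b} t * \<bar>wderiv p a b y t\<bar> powr p / R powr p) \<partial>lborel)
      = (\<integral>\<^sup>+t. ennreal (indicator {a..b} t * (weight t + 2))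
          + ennreal (1 / R powr p) * ennreal (indicator {a..b} t * \<bar>wderiv p a b y t\<bar> powr p) \<partial>lborel)"
    using weight_nonneg by (intro nn_integral_cong)
      (simp add: ennreal_mult'[symmetric] ennreal_plus[symmetric] del: ennreal_plus)
  also have "\<dots> = ennreal weight_mass
      + ennreal (1 / R powr p) * (\<integral>\<^sup>+t. ennreal (indicator {a..b} t * \<bar>wderiv p a b y t\<bar> powr p) \<partial>lborel)"
    using weight_measurable borel_measurable_wderiv_powr[OF assms]
    by (simp add: nn_integral_add nn_integral_cmult nn_integral_weight)
  also have "\<dots> \<le> ennreal weight_mass + ennreal (1 / R powr p) * ennreal (R powr p)"
    using nn_integral_wderiv_powr_le[OF assms] p by (intro add_left_mono mult_left_mono) (auto simp: R_def)
  also have "ennreal (1 / R powr p) * ennreal (R powr p) = ennreal 1"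
    using R by (simp add: ennreal_mult'[symmetric])
  also have "ennreal weight_mass + ennreal 1 = ennreal (weight_mass + 1)"
    by (simp add: weight_mass_def)
  finally show ?thesis by (simp add: R_def)
qed

lemma Ifun_ge:
  assumes y: "y \<in> admissible"
  shows "ereal (c0 * (radius y powr p - 1) - 2 * monomial_const * (weight_mass + 1) * radius y powr degree)
         \<le> Ifun F lam mu k a b p y"
proof -
  have yW: "y \<in> W1p p a b" using y by simp
  define g where "g = wderiv p a b y"
  define K where "K = monomial_const * radius y powr degree"
  define H where "H = (\<lambda>t. c0 * (indicator {a..b} t * \<bar>g t\<bar> powr p))"
  define S where "S = (\<lambda>t. K * (indicator {a..b} t * (weight t + 2)
      + indicator {a..b} t * \<bar>g t\<bar> powr p / radius y powr p))"
  have K: "0 \<le> K" using monomial_const_nonneg by (simp add: K_def)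
  have gm: "(\<lambda>t. indicator {a..b} t * \<bar>g t\<bar> powr p) \<in> borel_measurable lborel"
    using borel_measurable_wderiv_powr[OF yW] by (simp add: g_def)
  have HI: "(\<integral>\<^sup>+t. ennreal (H t) \<partial>lborel) = ennreal (c0 * (radius y powr p - 1))"
  proof -
    have "(\<integral>\<^sup>+t. ennreal (H t) \<partial>lborel)
        = (\<integral>\<^sup>+t. ennreal c0 * ennreal (indicator {a..b} t * \<bar>g t\<bar> powr p) \<partial>lborel)"
      using c0 by (intro nn_integral_cong) (simp add: H_def ennreal_mult'[symmetric])
    also have "\<dots> = ennreal c0 * (\<integral>\<^sup>+t. ennreal (indicator {a..b} t * \<bar>g t\<bar> powr p) \<partial>lborel)"
      using gm by (simp add: nn_integral_cmult)
    finally show ?thesis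
      using c0 p nn_integral_wderiv_powr[OF yW] W1p_radius_powr[of p a b y]
      by (simp add: g_def ennreal_mult'[symmetric])
  qed
  have "(\<integral>\<^sup>+t. ennreal (S t) \<partial>lborel)
      = ennreal K * (\<integral>\<^sup>+t. ennreal (indicator {a..b} t * (weight t + 2)
            + indicator {a..b} t * \<bar>g t\<bar> powr p / radius y powr p) \<partial>lborel)"
    using K weight_measurable gm
    by (simp add: S_def ennreal_mult' nn_integral_cmult weight_nonneg)
  also have "\<dots> \<le> ennreal K * ennreal (weight_mass + 1)"
    using nn_integral_slack_le[OF yW] by (intro mult_left_mono) (auto simp: g_def)
  finally have SI: "(\<integral>\<^sup>+t. ennreal (S t) \<partial>lborel) \<le> ennreal (K * (weight_mass + 1))"
    using K by (simp add: ennreal_mult')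
  have "ereal (c0 * (radius y powr p - 1) - 2 * (K * (weight_mass + 1)))
      \<le> ext_integral a b (\<lambda>t. F (y t) (KP lam mu k a b y t) (g t) (BP lam mu k a b p y t) t)"
  proof (rule ext_integral_ge[OF _ _ _ _ HI SI])
    show "H \<in> borel_measurable lborel" "S \<in> borel_measurable lborel"
      using gm weight_measurable by (simp_all add: H_def S_def)
    show "0 \<le> H t" "0 \<le> S t" for t
      using c0 K weight_nonneg[of t] by (simp_all add: H_def S_def)
    show "0 \<le> K * (weight_mass + 1)"
      using K by (simp add: weight_mass_def)
    show "H t = 0" if "t \<notin> {a..b}" for t
      using that by (simp add: H_def)
    show "AE t in lborel. t \<in> {a..b} \<longrightarrow> H t - S t
        \<le> F (y t) (KP lam mu k a b y t) (g t) (BP lam mu k a b p y t) t"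
      using section_weight_eq_weight
    proof eventually_elim
      case (elim t)
      then show ?case
        using integrand_ge[OF y _ elim] by (auto simp: H_def S_def K_def g_def algebra_simps)
    qed
  qed
  then show ?thesis
    by (simp add: Ifun_def g_def K_def algebra_simps)
qed

lemma coercive: "coercive_on admissible (W1p_norm p a b) (Ifun F lam mu k a b p)"
proof (rule coercive_onI)
  show "0 < (b - a) powr (1/p) * sup_const + 1"
    using sup_const_ge_one by (intro add_nonneg_pos mult_nonneg_nonneg) auto
  show "filterlim (\<lambda>R. c0 * (R powr p - 1) - 2 * monomial_const * (weight_mass + 1) * R powr degree) at_top at_top"
    using monomial_const_nonneg
    by (intro filterlim_powr_minus_powr_at_top c0 degree_nonneg degree_less) (simp add: weight_mass_def)
  show "\<exists>R. W1p_norm p a b y \<le> ((b - a) powr (1/p) * sup_const + 1) * R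
      \<and> ereal (c0 * (R powr p - 1) - 2 * monomial_const * (weight_mass + 1) * R powr degree)
        \<le> Ifun F lam mu k a b p y"
    if "y \<in> admissible" for y
    using that Ifun_ge W1p_norm_le_radius[of y p a b] ab p by (auto simp: sup_const_def)
qed

end

theorem mainTheorem15:
  fixes a b p q lam mu ya c0 :: real
    and k :: "real \<times> real \<Rightarrow> real"
    and F :: "real \<Rightarrow> real \<Rightarrow> real \<Rightarrow> real \<Rightarrow> real \<Rightarrow> real"
    and N :: nat and c d1 d2 d3 d4 :: "nat \<Rightarrow> real"
  assumes "a < b" and "1 < p" and "q = p / (p - 1)"
    and "set_borel_measurable lborel {(t, \<tau>). a \<le> \<tau> \<and> \<tau> < t \<and> t \<le> b} k"
    and "set_integrable lborel {(t, \<tau>). a \<le> \<tau> \<and> \<tau> < t \<and> t \<le> b} (\<lambda>z. \<bar>k z\<bar> powr q)"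
    and "C1_on (UNIV \<times> UNIV \<times> UNIV \<times> UNIV \<times> {a..b})
           (\<lambda>(x1, x2, x3, x4, t). F x1 x2 x3 x4 t)"
    and "c0 > 0"
    and "\<forall>j\<in>{1..N}. 0 \<le> d1 j \<and> 0 \<le> d2 j \<and> d2 j \<le> q \<and> 0 \<le> d3 j \<and> d3 j \<le> p
           \<and> 0 \<le> d4 j \<and> d4 j \<le> q \<and> d2 j + (q / p) * d3 j + d4 j \<le> q
           \<and> 0 \<le> d1 j + d2 j + d3 j + d4 j \<and> d1 j + d2 j + d3 j + d4 j < p"
    and "\<forall>x1 x2 x3 x4 t. t \<in> {a..b} \<longrightarrow>
           F x1 x2 x3 x4 t \<ge> c0 * \<bar>x3\<bar> powr p
             + (\<Sum>j=1..N. c j * pw x1 (d1 j) * pw x2 (d2 j) * pw x3 (d3 j) * pw x4 (d4 j))"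
  shows "coercive_on {y \<in> W1p p a b. y a = ya} (W1p_norm p a b) (Ifun F lam mu k a b p)"
proof -
  interpret coercivity_hypotheses a b p q lam mu ya c0 k F N c d1 d2 d3 d4
  proof unfold_locales
    show "set_integrable lborel (lower_triangle a b) (\<lambda>z. \<bar>k z\<bar> powr q)"
      using assms(5) by (simp add: lower_triangle_def)
  qed (fact assms)+
  show ?thesis by (rule coercive)
qed

end
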